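(* Let $(\preceq_s)_{s\in S}$ be a finite family of WQOs on $X$ with conjunction $\preceq$. Suppose $I_s$ is a $\preceq_s$-ideal for each $s\in S$, $I=\bigcap_{s\in S}I_s$, and $(I_s)_{s\in S}\in\mathrm{Adh}_S(I)$. Then for every $L\subseteq X$: $I\in\mathrm{Adh}_\preceq(L)$ if and only if $(I_s)_{s\in S}\in\mathrm{Adh}_S(L)$.
   Context: Conjunction: $x\preceq y$ iff $x\preceq_s y$ for all $s$. An ideal is a nonempty, downward closed, directed subset. $\mathrm{Adh}_\preceq(L)$ is the set of $\preceq$-ideals $J$ such that $J=\downarrow_\preceq D$ for some $\preceq$-directed $D\subseteq L$ (equivalently $J\subseteq\downarrow_\preceq(L\cap J)$). $\mathrm{Adh}_S(L)$ is the set of families $(I_s)_{s\in S}$ of ideals ($I_s$ a $\preceq_s$-ideal) for which there is a $\preceq$-directed set $D\subseteq L$ with $I_s=\downarrow_{\preceq_s}D$ for every $s\in S$. *)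

theory Defs
  imports Main
begin

definition qo_on :: "'a set \<Rightarrow> ('a \<Rightarrow> 'a \<Rightarrow> bool) \<Rightarrow> bool" where
  "qo_on X r \<longleftrightarrow> (\<forall>x\<in>X. r x x) \<and> (\<forall>x\<in>X. \<forall>y\<in>X. \<forall>z\<in>X. r x y \<longrightarrow> r y z \<longrightarrow> r x z)"

definition wqo_on :: "'a set \<Rightarrow> ('a \<Rightarrow> 'a \<Rightarrow> bool) \<Rightarrow> bool" where
  "wqo_on X r \<longleftrightarrow> qo_on X r \<and>
     (\<forall>f :: nat \<Rightarrow> 'a. (\<forall>i. f i \<in> X) \<longrightarrow> (\<exists>i j. i < j \<and> r (f i) (f j)))"

definition conj_qo :: "'s set \<Rightarrow> ('s \<Rightarrow> 'a \<Rightarrow> 'a \<Rightarrow> bool) \<Rightarrow> 'a \<Rightarrow> 'a \<Rightarrow> bool" where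
  "conj_qo S le x y \<longleftrightarrow> (\<forall>s\<in>S. le s x y)"

definition down_closure :: "'a set \<Rightarrow> ('a \<Rightarrow> 'a \<Rightarrow> bool) \<Rightarrow> 'a set \<Rightarrow> 'a set" where
  "down_closure X r D = {x\<in>X. \<exists>d\<in>D. r x d}"

definition directed_on :: "('a \<Rightarrow> 'a \<Rightarrow> bool) \<Rightarrow> 'a set \<Rightarrow> bool" where
  "directed_on r D \<longleftrightarrow> D \<noteq> {} \<and> (\<forall>x\<in>D. \<forall>y\<in>D. \<exists>z\<in>D. r x z \<and> r y z)"

definition ideal_on :: "'a set \<Rightarrow> ('a \<Rightarrow> 'a \<Rightarrow> bool) \<Rightarrow> 'a set \<Rightarrow> bool" where
  "ideal_on X r J \<longleftrightarrow> J \<subseteq> X \<and> J \<noteq> {} \<and>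
     (\<forall>x\<in>X. \<forall>y\<in>J. r x y \<longrightarrow> x \<in> J) \<and> directed_on r J"

definition Adh :: "'a set \<Rightarrow> ('a \<Rightarrow> 'a \<Rightarrow> bool) \<Rightarrow> 'a set \<Rightarrow> 'a set set" where
  "Adh X r L = {J. ideal_on X r J \<and> (\<exists>D. D \<subseteq> L \<and> directed_on r D \<and> J = down_closure X r D)}"

text \<open>Families (I s) for s in S; values outside S are irrelevant.\<close>
definition Adh_S :: "'a set \<Rightarrow> 's set \<Rightarrow> ('s \<Rightarrow> 'a \<Rightarrow> 'a \<Rightarrow> bool) \<Rightarrow> 'a set \<Rightarrow> ('s \<Rightarrow> 'a set) set" where
  "Adh_S X S le L = {I. (\<forall>s\<in>S. ideal_on X (le s) (I s)) \<and>
     (\<exists>D. D \<subseteq> L \<and> directed_on (conj_qo S le) D \<and> (\<forall>s\<in>S. I s = down_closure X (le s) D))}"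

end

theory Submission
  imports Defs
begin

text \<open>An intersection of down-closures of one directed set D is the down-closure of D for the
  conjunction, because finitely many witnesses in D have a common upper bound in D. Hence for
  \<open>I = \<Inter>s. I\<^sub>s\<close> the two adherence conditions are witnessed by the same set D. In the forward
  direction the hypothesis \<open>(I\<^sub>s)\<^sub>s \<in> Adh\<^sub>S(I)\<close> provides a set E \<open>\<subseteq>\<close> I generating every \<open>I\<^sub>s\<close>, and
  D and E are mutually cofinal.\<close>

lemma qo_on_reflD: "qo_on X r \<Longrightarrow> x \<in> X \<Longrightarrow> r x x"
  unfolding qo_on_def by blast

lemma qo_on_transD:
  "qo_on X r \<Longrightarrow> x \<in> X \<Longrightarrow> y \<in> X \<Longrightarrow> z \<in> X \<Longrightarrow> r x y \<Longrightarrow> r y z \<Longrightarrow> r x z"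
  unfolding qo_on_def by blast

lemma qo_on_conj_qo:
  assumes "\<forall>s\<in>S. qo_on X (le s)"
  shows "qo_on X (conj_qo S le)"
  using assms unfolding qo_on_def conj_qo_def by blast

lemma subset_down_closure:
  assumes "qo_on X r" "D \<subseteq> X"
  shows "D \<subseteq> down_closure X r D"
  using assms(2) qo_on_reflD[OF assms(1)] unfolding down_closure_def by blast

lemma down_closure_subset_down_closure:
  assumes "qo_on X r" "E \<subseteq> X" "D \<subseteq> down_closure X r E"
  shows "down_closure X r D \<subseteq> down_closure X r E"
proof
  fix x assume "x \<in> down_closure X r D"
  then obtain d where "x \<in> X" "d \<in> D" "r x d"
    unfolding down_closure_def by blast
  moreover from \<open>d \<in> D\<close> obtain e where "d \<in> X" "e \<in> E" "r d e"
    using assms(3) unfolding down_closure_def by blast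
  ultimately show "x \<in> down_closure X r E"
    using qo_on_transD[OF assms(1)] assms(2) unfolding down_closure_def by blast
qed

lemma down_closure_eq_if_cofinal:
  assumes "qo_on X r" "D \<subseteq> X" "E \<subseteq> X"
    and "D \<subseteq> down_closure X r E" "E \<subseteq> down_closure X r D"
  shows "down_closure X r D = down_closure X r E"
  using down_closure_subset_down_closure[OF assms(1,3,4)]
    down_closure_subset_down_closure[OF assms(1,2,5)] by (rule equalityI)

lemma down_closure_conj_qo_subset:
  assumes "s \<in> S"
  shows "down_closure X (conj_qo S le) D \<subseteq> down_closure X (le s) D"
  using assms unfolding down_closure_def conj_qo_def by blast

lemma directed_on_finite_upper_bound:
  assumes "qo_on X r" "directed_on r D" "D \<subseteq> X" "finite F" "F \<subseteq> D"
  shows "\<exists>d\<in>D. \<forall>f\<in>F. r f d"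
  using assms(4,5)
proof (induction F rule: finite_induct)
  case empty
  then show ?case using assms(2) unfolding directed_on_def by auto
next
  case (insert a F)
  then obtain d where d: "d \<in> D" "\<forall>f\<in>F. r f d" by auto
  moreover obtain z where "z \<in> D" "r a z" "r d z"
    using d insert.prems assms(2) unfolding directed_on_def by blast
  ultimately show ?case
    using qo_on_transD[OF assms(1)] assms(3) insert.prems by blast
qed

lemma ideal_on_down_closure:
  assumes "qo_on X r" "directed_on r D" "D \<subseteq> X"
  shows "ideal_on X r (down_closure X r D)"
  unfolding ideal_on_def
proof (intro conjI ballI impI)
  have D_sub: "D \<subseteq> down_closure X r D"
    using assms(1,3) by (rule subset_down_closure)
  then show nonempty: "down_closure X r D \<noteq> {}"
    using assms(2) unfolding directed_on_def by blast
  show "directed_on r (down_closure X r D)"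
    unfolding directed_on_def
  proof (intro conjI ballI)
    fix x y assume "x \<in> down_closure X r D" "y \<in> down_closure X r D"
    then obtain a b where "a \<in> D" "r x a" "x \<in> X" "b \<in> D" "r y b" "y \<in> X"
      unfolding down_closure_def by blast
    moreover obtain z where "z \<in> D" "r a z" "r b z"
      using assms(2) \<open>a \<in> D\<close> \<open>b \<in> D\<close> unfolding directed_on_def by blast
    ultimately show "\<exists>z\<in>down_closure X r D. r x z \<and> r y z"
      using qo_on_transD[OF assms(1)] assms(3) D_sub by blast
  qed (fact nonempty)
  show "down_closure X r D \<subseteq> X"
    unfolding down_closure_def by blast
  show "x \<in> down_closure X r D" if "x \<in> X" "y \<in> down_closure X r D" "r x y" for x y
    using that qo_on_transD[OF assms(1)] assms(3) unfolding down_closure_def by blast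
qed

lemma down_closure_conj_qo:
  assumes "finite S" "\<forall>s\<in>S. qo_on X (le s)"
    and "directed_on (conj_qo S le) D" "D \<subseteq> X"
  shows "down_closure X (conj_qo S le) D = {x\<in>X. \<forall>s\<in>S. x \<in> down_closure X (le s) D}"
proof (intro equalityI subsetI)
  fix x assume "x \<in> down_closure X (conj_qo S le) D"
  then show "x \<in> {x\<in>X. \<forall>s\<in>S. x \<in> down_closure X (le s) D}"
    using down_closure_conj_qo_subset[of _ S X le D] unfolding down_closure_def by blast
next
  fix x assume x: "x \<in> {x\<in>X. \<forall>s\<in>S. x \<in> down_closure X (le s) D}"
  then have "\<forall>s\<in>S. \<exists>d\<in>D. le s x d"
    unfolding down_closure_def by blast
  then obtain g where g: "\<forall>s\<in>S. g s \<in> D \<and> le s x (g s)"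
    by metis
  obtain d where d: "d \<in> D" "\<forall>s'\<in>S. conj_qo S le (g s') d"
    using directed_on_finite_upper_bound[OF qo_on_conj_qo[OF assms(2)] assms(3,4), of "g ` S"]
      assms(1) g by blast
  have "le s x d" if "s \<in> S" for s
  proof (rule qo_on_transD[where y = "g s"])
    show "qo_on X (le s)" using that assms(2) by blast
    show "x \<in> X" using x by blast
    show "g s \<in> X" "le s x (g s)" using that g assms(4) by auto
    show "d \<in> X" using d(1) assms(4) by blast
    show "le s (g s) d" using that d(2) unfolding conj_qo_def by blast
  qed
  then show "x \<in> down_closure X (conj_qo S le) D"
    using x d(1) unfolding down_closure_def conj_qo_def by blast
qed

theorem mainTheorem11:
  fixes X :: "'a set" and S :: "'s set" and le :: "'s \<Rightarrow> 'a \<Rightarrow> 'a \<Rightarrow> bool"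
    and Is :: "'s \<Rightarrow> 'a set" and L :: "'a set"
  assumes "finite S"
    and "\<forall>s\<in>S. wqo_on X (le s)"
    and "\<forall>s\<in>S. ideal_on X (le s) (Is s)"
    and "Is \<in> Adh_S X S le {x\<in>X. \<forall>s\<in>S. x \<in> Is s}"
    and "L \<subseteq> X"
  shows "{x\<in>X. \<forall>s\<in>S. x \<in> Is s} \<in> Adh X (conj_qo S le) L \<longleftrightarrow> Is \<in> Adh_S X S le L"
    (is "?I \<in> _ \<longleftrightarrow> _")
proof -
  have qo: "\<forall>s\<in>S. qo_on X (le s)"
    using assms(2) unfolding wqo_on_def by blast
  show ?thesis
  proof
    assume "?I \<in> Adh X (conj_qo S le) L"
    then obtain D where D: "D \<subseteq> L" "directed_on (conj_qo S le) D"
      and I_eq: "?I = down_closure X (conj_qo S le) D"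
      unfolding Adh_def by blast
    obtain E where "E \<subseteq> ?I" and Is_eq: "\<forall>s\<in>S. Is s = down_closure X (le s) E"
      using assms(4) unfolding Adh_S_def by blast
    have "D \<subseteq> X" "E \<subseteq> X"
      using D(1) assms(5) \<open>E \<subseteq> ?I\<close> by auto
    have "D \<subseteq> ?I"
      unfolding I_eq using qo_on_conj_qo[OF qo] \<open>D \<subseteq> X\<close> by (rule subset_down_closure)
    have "Is s = down_closure X (le s) D" if "s \<in> S" for s
    proof -
      have "D \<subseteq> down_closure X (le s) E"
        using \<open>D \<subseteq> ?I\<close> Is_eq that by blast
      moreover have "E \<subseteq> down_closure X (le s) D"
        using \<open>E \<subseteq> ?I\<close> down_closure_conj_qo_subset[OF that] unfolding I_eq by (rule subset_trans)
      ultimately show ?thesis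
        using down_closure_eq_if_cofinal[OF qo[rule_format, OF that] \<open>D \<subseteq> X\<close> \<open>E \<subseteq> X\<close>]
          Is_eq that by simp
    qed
    then show "Is \<in> Adh_S X S le L"
      using D assms(3) unfolding Adh_S_def by blast
  next
    assume "Is \<in> Adh_S X S le L"
    then obtain D where D: "D \<subseteq> L" "directed_on (conj_qo S le) D"
      and Is_eq: "\<forall>s\<in>S. Is s = down_closure X (le s) D"
      unfolding Adh_S_def by blast
    have "D \<subseteq> X"
      using D(1) assms(5) by blast
    have I_eq: "?I = down_closure X (conj_qo S le) D"
      using down_closure_conj_qo[OF assms(1) qo D(2) \<open>D \<subseteq> X\<close>] Is_eq by simp
    have "ideal_on X (conj_qo S le) (down_closure X (conj_qo S le) D)"
      using qo_on_conj_qo[OF qo] D(2) \<open>D \<subseteq> X\<close> by (rule ideal_on_down_closure)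
    then show "?I \<in> Adh X (conj_qo S le) L"
      unfolding I_eq Adh_def using D by blast
  qed
qed

end
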